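(* Every Ehrhart fan is balanced: if $\Sigma$ is an Ehrhart fan of dimension $d$, then for every $\tau\in\Sigma(d-1)$, \[ \sum_{\sigma\in\Sigma(d),\ \tau\subseteq\sigma}u_{\sigma(1)\setminus\tau(1)}\in\mathrm{span}_\mathbb{R}(\tau), \] where $u_{\sigma(1)\setminus\tau(1)}$ denotes the primitive generator of the unique ray of $\sigma$ not in $\tau$.
   Context: $N$ is a free abelian group, $N_\mathbb{R}=N\otimes\mathbb{R}$, $M=\mathrm{Hom}(N,\mathbb{Z})$ viewed as integral linear functions. $\Sigma(k)$ denotes the set of $k$-dimensional cones of a fan $\Sigma$. A fan is unimodular if it contains the origin and for each cone the primitive ray generators $u_\rho\in N$ extend to a $\mathbb{Z}$-basis of $N$. $\mathrm{PL}(\Sigma)$: functions on $|\Sigma|$ agreeing on each cone with some element of $M$; $\underline{\mathrm{PL}}(\Sigma)$ its quotient by restrictions of elements of $M$. Courant function $\delta_\rho$: $1$ at $u_\rho$, $0$ at other ray generators. Star fan $\Sigma^\sigma$: image in $N_\mathbb{R}/\mathrm{span}(\sigma)$ (lattice $N/\mathrm{Span}_\mathbb{Z}(\sigma\cap N)$) of all cones that are faces of cones containing $\sigma$; $[f]^\sigma$ is the class of the function induced by $f-m$, $m\in M$ agreeing with $f$ on $\sigma$. A unimodular fan $\Sigma$ is Ehrhart (recursively on dimension) if (1) $\Sigma^\rho$ is Ehrhart for every ray $\rho$, and (2) there is $\chi_\Sigma:\underline{\mathrm{PL}}(\Sigma)\to\mathbb{Z}$ with $\chi_\Sigma(0)=1$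 and $\chi_\Sigma([f])=\chi_\Sigma([f-\delta_\rho])+\chi_{\Sigma^\rho}([f]^\rho)$ for all $f\in\mathrm{PL}(\Sigma)$, $\rho\in\Sigma(1)$. Zero-dimensional fans are Ehrhart with $\chi=1$. *)

theory Defs
  imports "HOL-Analysis.Analysis"
begin

text \<open>The lattice N is modelled as the integer points of real^'n, so N_R = real^'n.
A unimodular fan is represented by the set of its cones, each cone being given by the
(finite) set of primitive generators of its rays; the actual cone is cone_of S.\<close>

definition lattice_pts :: "(real^'n) set" where
  "lattice_pts = {x. \<forall>i. x $ i \<in> \<int>}"

definition cone_of :: "(real^'n) set \<Rightarrow> (real^'n) set" where
  "cone_of S = {(\<Sum>s\<in>S. c s *\<^sub>R s) | c. \<forall>s\<in>S. 0 \<le> c s}"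

definition int_basis :: "(real^'n) set \<Rightarrow> bool" where
  "int_basis B \<longleftrightarrow> finite B \<and> B \<subseteq> lattice_pts \<and> independent B \<and>
     (\<forall>x\<in>lattice_pts. \<exists>c. (\<forall>b\<in>B. c b \<in> \<int>) \<and> x = (\<Sum>b\<in>B. c b *\<^sub>R b))"

definition unimodular_fan :: "(real^'n) set set \<Rightarrow> bool" where
  "unimodular_fan F \<longleftrightarrow> finite F \<and> {} \<in> F \<and>
     (\<forall>S\<in>F. finite S \<and> (\<forall>T. T \<subseteq> S \<longrightarrow> T \<in> F) \<and> (\<exists>B. int_basis B \<and> S \<subseteq> B)) \<and>
     (\<forall>S\<in>F. \<forall>T\<in>F. cone_of S \<inter> cone_of T = cone_of (S \<inter> T))"

definition fan_dim :: "(real^'n) set set \<Rightarrow> nat" where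
  "fan_dim F = Max (card ` F)"

text \<open>Integral linear functions on the quotient lattice N/Span_Z(sigma), i.e. elements
of M vanishing on sigma.\<close>
definition int_lin :: "(real^'n) set \<Rightarrow> (real^'n \<Rightarrow> real) \<Rightarrow> bool" where
  "int_lin \<sigma> m \<longleftrightarrow> linear m \<and> (\<forall>x\<in>lattice_pts. m x \<in> \<int>) \<and> (\<forall>v\<in>\<sigma>. m v = 0)"

text \<open>Functions on the support of the star fan F^sigma are represented by their
pullbacks to the union of the cones of F containing sigma (which maps onto |F^sigma|).\<close>
definition star_supp :: "(real^'n) set set \<Rightarrow> (real^'n) set \<Rightarrow> (real^'n) set" where
  "star_supp F \<sigma> = \<Union> (cone_of ` {\<tau>\<in>F. \<sigma> \<subseteq> \<tau>})"

definition PL :: "(real^'n) set set \<Rightarrow> (real^'n) set \<Rightarrow> (real^'n \<Rightarrow> real) set" where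
  "PL F \<sigma> = {f. (\<forall>x. x \<notin> star_supp F \<sigma> \<longrightarrow> f x = 0) \<and>
     (\<forall>\<tau>\<in>F. \<sigma> \<subseteq> \<tau> \<longrightarrow> (\<exists>m. int_lin \<sigma> m \<and> (\<forall>x\<in>cone_of \<tau>. f x = m x)))}"

text \<open>f and g have the same class in PL-bar(F^sigma).\<close>
definition lin_equiv :: "(real^'n) set set \<Rightarrow> (real^'n) set \<Rightarrow> (real^'n \<Rightarrow> real) \<Rightarrow> (real^'n \<Rightarrow> real) \<Rightarrow> bool" where
  "lin_equiv F \<sigma> f g \<longleftrightarrow> (\<exists>m. int_lin \<sigma> m \<and> (\<forall>x\<in>star_supp F \<sigma>. f x - g x = m x))"

text \<open>Rays of the star fan F^sigma (given by representatives of their primitive generators).\<close>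
definition star_rays :: "(real^'n) set set \<Rightarrow> (real^'n) set \<Rightarrow> (real^'n) set" where
  "star_rays F \<sigma> = {u. u \<notin> \<sigma> \<and> insert u \<sigma> \<in> F}"

definition courant :: "(real^'n) set set \<Rightarrow> (real^'n) set \<Rightarrow> real^'n \<Rightarrow> (real^'n \<Rightarrow> real)" where
  "courant F \<sigma> u = (THE f. f \<in> PL F \<sigma> \<and> f u = 1 \<and> (\<forall>v\<in>star_rays F \<sigma> - {u}. f v = 0))"

text \<open>[f]^u, given m integral linear (on the quotient by sigma) agreeing with f at u:
the function induced by f - m on the star of u in F^sigma, i.e. on F^(sigma + u).\<close>
definition star_class :: "(real^'n) set set \<Rightarrow> (real^'n) set \<Rightarrow> real^'n \<Rightarrow> (real^'n \<Rightarrow> real) \<Rightarrow> (real^'n \<Rightarrow> real) \<Rightarrow> (real^'n \<Rightarrow> real)" where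
  "star_class F \<sigma> u f m = (\<lambda>x. if x \<in> star_supp F (insert u \<sigma>) then f x - m x else 0)"

text \<open>X sigma is an admissible chi for the star fan F^sigma, relative to the chosen
chi's X (sigma + u) of its star fans.\<close>
definition chi_ok :: "(real^'n) set set \<Rightarrow> ((real^'n) set \<Rightarrow> (real^'n \<Rightarrow> real) \<Rightarrow> int) \<Rightarrow> (real^'n) set \<Rightarrow> bool" where
  "chi_ok F X \<sigma> \<longleftrightarrow>
     X \<sigma> (\<lambda>_. 0) = 1 \<and>
     (\<forall>f\<in>PL F \<sigma>. \<forall>g\<in>PL F \<sigma>. lin_equiv F \<sigma> f g \<longrightarrow> X \<sigma> f = X \<sigma> g) \<and>
     (\<forall>f\<in>PL F \<sigma>. \<forall>u\<in>star_rays F \<sigma>. \<forall>m. int_lin \<sigma> m \<and> m u = f u \<longrightarrow>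
        X \<sigma> f = X \<sigma> (\<lambda>x. f x - courant F \<sigma> u x) + X (insert u \<sigma>) (star_class F \<sigma> u f m))"

text \<open>Ehrhart fan: unfolding the recursive definition, every star fan F^sigma
(sigma in F; F^{} = F, and (F^sigma)^u = F^(sigma+u)) carries a chi compatible with
the chi's of its own star fans.\<close>
definition ehrhart_fan :: "(real^'n) set set \<Rightarrow> bool" where
  "ehrhart_fan F \<longleftrightarrow> unimodular_fan F \<and> (\<exists>X. \<forall>\<sigma>\<in>F. chi_ok F X \<sigma>)"

end

theory Submission
  imports Defs
begin

(* The star fan of \<tau> is one-dimensional and its own star fans are zero-dimensional, so
   the defining recursion of \<chi> reads \<chi>(f) = \<chi>(f - \<delta>_u) + 1 for every ray u, whence
   \<chi>(\<Sum> k_u \<delta>_u) = 1 + \<Sum> k_u. An integral linear function m vanishing on \<tau> equals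
   \<Sum> m(u) \<delta>_u on the star of \<tau>, and its class is zero, so \<Sum> m(u) = 0, i.e. m kills
   the sum of the rays. As \<tau> extends to a Z-basis, a vector killed by all such m
   lies in span \<tau>. *)

lemma sum_scaleR_in_span: "(\<Sum>s\<in>S. c s *\<^sub>R s) \<in> span S"
  by (intro span_sum span_scale span_base)

lemma cone_of_subset_span: "cone_of S \<subseteq> span S"
  by (auto simp: cone_of_def sum_scaleR_in_span)

lemma generator_in_cone_of:
  assumes "finite S" "s \<in> S"
  shows "s \<in> cone_of S"
proof -
  have "(\<Sum>t\<in>S. (if t = s then 1 else 0) *\<^sub>R t) = s"
    using assms by (simp add: if_distrib[of "\<lambda>c. c *\<^sub>R _"] cong: if_cong)
  then show ?thesis
    unfolding cone_of_def by (auto intro!: exI[of _ "\<lambda>t. if t = s then 1 else 0"])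
qed

lemma linear_eq_0_on_cone_of:
  assumes "linear \<phi>" "\<forall>s\<in>S. \<phi> s = 0" "x \<in> cone_of S"
  shows "\<phi> x = 0"
  using linear_eq_0_on_span[OF assms(1)] assms(2,3) cone_of_subset_span by blast

subsection \<open>Integral bases and integral linear functions\<close>

lemma span_int_basis:
  fixes B :: "(real^'n) set"
  assumes "int_basis B"
  shows "span B = UNIV"
proof -
  have "lattice_pts \<subseteq> span B"
  proof
    fix x :: "real^'n" assume "x \<in> lattice_pts"
    then obtain c where "x = (\<Sum>b\<in>B. c b *\<^sub>R b)"
      using assms unfolding int_basis_def by blast
    then show "x \<in> span B" by (simp add: sum_scaleR_in_span)
  qed
  moreover have "Basis \<subseteq> lattice_pts"
    unfolding lattice_pts_def Basis_vec_def by (auto simp: axis_def)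
  ultimately have "span Basis \<subseteq> span B"
    by (meson order_trans span_minimal subspace_span)
  then show ?thesis by (simp add: span_Basis top.extremum_unique)
qed

lemma int_basis_coordinate:
  fixes B :: "(real^'n) set"
  assumes "int_basis B" "b0 \<in> B"
  obtains \<phi> :: "real^'n \<Rightarrow> real"
  where "linear \<phi>" "\<forall>x\<in>lattice_pts. \<phi> x \<in> \<int>" "\<phi> b0 = 1" "\<forall>b\<in>B - {b0}. \<phi> b = 0"
proof -
  have fin: "finite B" and ind: "independent B"
    and coords: "\<forall>x\<in>lattice_pts. \<exists>c. (\<forall>b\<in>B. c b \<in> \<int>) \<and> x = (\<Sum>b\<in>B. c b *\<^sub>R b)"
    using assms(1) unfolding int_basis_def by auto
  obtain \<phi> :: "real^'n \<Rightarrow> real" where lin: "linear \<phi>" and val: "\<forall>b\<in>B. \<phi> b = (if b = b0 then 1 else 0)"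
    using linear_independent_extend[OF ind, of "\<lambda>b. if b = b0 then 1 else 0"] by blast
  have "\<phi> x \<in> \<int>" if x: "x \<in> lattice_pts" for x
  proof -
    obtain c where c: "\<forall>b\<in>B. c b \<in> \<int>" "x = (\<Sum>b\<in>B. c b *\<^sub>R b)"
      using coords x by blast
    have "\<phi> x = (\<Sum>b\<in>B. c b * \<phi> b)"
      using c(2) lin by (simp add: linear_sum linear_scale)
    also have "\<dots> = (\<Sum>b\<in>B. if b = b0 then c b else 0)"
      using val by (intro sum.cong) auto
    also have "\<dots> = c b0"
      using fin assms(2) by simp
    finally show ?thesis using c(1) assms(2) by simp
  qed
  with lin val assms(2) show ?thesis by (intro that[of \<phi>]) auto
qed

lemma in_span_if_int_lin_vanish:
  fixes B :: "(real^'n) set"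
  assumes "int_basis B" "\<tau> \<subseteq> B" "\<forall>m. int_lin \<tau> m \<longrightarrow> m w = 0"
  shows "w \<in> span \<tau>"
proof -
  have fin: "finite B" using assms(1) int_basis_def by blast
  obtain c where c: "w = (\<Sum>b\<in>B. c b *\<^sub>R b)"
    using span_int_basis[OF assms(1)] span_finite[OF fin] by auto
  have "c b0 = 0" if b0: "b0 \<in> B - \<tau>" for b0
  proof -
    obtain \<phi> :: "real^'n \<Rightarrow> real"
      where \<phi>: "linear \<phi>" "\<forall>x\<in>lattice_pts. \<phi> x \<in> \<int>" "\<phi> b0 = 1" "\<forall>b\<in>B - {b0}. \<phi> b = 0"
      using int_basis_coordinate[OF assms(1)] b0 by blast
    have "int_lin \<tau> \<phi>" unfolding int_lin_def using \<phi> assms(2) b0 by auto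
    then have "0 = \<phi> w" using assms(3) by simp
    also have "\<dots> = (\<Sum>b\<in>B. c b * \<phi> b)" using c \<phi>(1) by (simp add: linear_sum linear_scale)
    also have "\<dots> = (\<Sum>b\<in>B. if b = b0 then c b else 0)" using \<phi>(3,4) by (intro sum.cong) auto
    also have "\<dots> = c b0" using fin b0 by simp
    finally show ?thesis by simp
  qed
  then have "w = (\<Sum>b\<in>\<tau>. c b *\<^sub>R b)"
    unfolding c using fin assms(2) by (intro sum.mono_neutral_right) auto
  then show ?thesis by (simp add: sum_scaleR_in_span)
qed

lemma int_lin_zero: "int_lin \<sigma> (\<lambda>x. 0)"
  unfolding int_lin_def by (auto intro: linearI)

lemma int_lin_add_int_mult:
  assumes "int_lin \<sigma> m1" "int_lin \<sigma> m2"
  shows "int_lin \<sigma> (\<lambda>x. m1 x + of_int k * m2 x)"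
proof -
  have "linear m1" "linear m2" using assms int_lin_def by auto
  then have "linear (\<lambda>x. m1 x + of_int k * m2 x)"
    by (intro linearI) (simp_all add: linear_add linear_scale algebra_simps)
  with assms show ?thesis unfolding int_lin_def by auto
qed

lemma PL_zero: "(\<lambda>x. 0) \<in> PL F \<sigma>"
  unfolding PL_def using int_lin_zero by fastforce

lemma PL_add_int_mult:
  assumes "g \<in> PL F \<sigma>" "h \<in> PL F \<sigma>"
  shows "(\<lambda>x. g x + of_int k * h x) \<in> PL F \<sigma>"
proof -
  have "\<exists>m. int_lin \<sigma> m \<and> (\<forall>x\<in>cone_of \<rho>. g x + of_int k * h x = m x)"
    if \<rho>: "\<rho> \<in> F" "\<sigma> \<subseteq> \<rho>" for \<rho>
  proof -
    obtain m1 m2 where "int_lin \<sigma> m1" "\<forall>x\<in>cone_of \<rho>. g x = m1 x"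
      and "int_lin \<sigma> m2" "\<forall>x\<in>cone_of \<rho>. h x = m2 x"
      using assms \<rho> unfolding PL_def by blast
    then show ?thesis using int_lin_add_int_mult by fastforce
  qed
  then show ?thesis using assms unfolding PL_def by auto
qed

lemma PL_restrict_int_lin:
  assumes "int_lin \<sigma> m"
  shows "(\<lambda>x. if x \<in> star_supp F \<sigma> then m x else 0) \<in> PL F \<sigma>"
  unfolding PL_def star_supp_def using assms by fastforce

lemma chi_restrict_int_lin:
  assumes "chi_ok F X \<sigma>" "int_lin \<sigma> m"
  shows "X \<sigma> (\<lambda>x. if x \<in> star_supp F \<sigma> then m x else 0) = 1"
proof -
  have invariant: "\<forall>f\<in>PL F \<sigma>. \<forall>g\<in>PL F \<sigma>. lin_equiv F \<sigma> f g \<longrightarrow> X \<sigma> f = X \<sigma> g"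
    and zero: "X \<sigma> (\<lambda>x. 0) = 1"
    using assms(1) unfolding chi_ok_def by blast+
  have "lin_equiv F \<sigma> (\<lambda>x. if x \<in> star_supp F \<sigma> then m x else 0) (\<lambda>x. 0)"
    unfolding lin_equiv_def using assms(2) by auto
  then have "X \<sigma> (\<lambda>x. if x \<in> star_supp F \<sigma> then m x else 0) = X \<sigma> (\<lambda>x. 0)"
    using invariant PL_restrict_int_lin[OF assms(2)] PL_zero by blast
  with zero show ?thesis by simp
qed

lemma PL_sum_int_mult:
  assumes "\<And>u. u \<in> A \<Longrightarrow> h u \<in> PL F \<sigma>"
  shows "(\<lambda>x. \<Sum>u\<in>A. of_int (k u) * h u x) \<in> PL F \<sigma>"
  using assms
proof (induction A rule: infinite_finite_induct)
  case (insert v A)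
  then have "(\<lambda>x. (\<Sum>u\<in>A. of_int (k u) * h u x) + of_int (k v) * h v x) \<in> PL F \<sigma>"
    by (intro PL_add_int_mult) auto
  then show ?case using insert.hyps by (simp add: add.commute)
qed (simp_all add: PL_zero)

locale unimodular =
  fixes F :: "(real^'n) set set"
  assumes unimodular_fan: "unimodular_fan F"
begin

lemma finite_fan: "finite F"
  using unimodular_fan unfolding unimodular_fan_def by blast

lemma face_closed: "\<sigma> \<in> F \<Longrightarrow> \<rho> \<subseteq> \<sigma> \<Longrightarrow> \<rho> \<in> F"
  using unimodular_fan unfolding unimodular_fan_def by blast

lemma finite_cone: "\<sigma> \<in> F \<Longrightarrow> finite \<sigma>"
  using unimodular_fan unfolding unimodular_fan_def by blast

lemma cone_extends_to_int_basis:
  assumes "\<sigma> \<in> F"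
  obtains B where "int_basis B" "\<sigma> \<subseteq> B"
proof -
  have "\<exists>B. int_basis B \<and> \<sigma> \<subseteq> B"
    using unimodular_fan assms unfolding unimodular_fan_def by blast
  with that show thesis by blast
qed

lemma cone_of_Int: "\<sigma> \<in> F \<Longrightarrow> \<rho> \<in> F \<Longrightarrow> cone_of \<sigma> \<inter> cone_of \<rho> = cone_of (\<sigma> \<inter> \<rho>)"
  using unimodular_fan unfolding unimodular_fan_def by blast

lemma finite_star_rays: "finite (star_rays F \<sigma>)"
proof (rule finite_subset)
  show "star_rays F \<sigma> \<subseteq> \<Union> F" unfolding star_rays_def by blast
  show "finite (\<Union> F)" using finite_fan finite_cone by blast
qed

lemma star_ray_in_lattice_pts:
  assumes "u \<in> star_rays F \<sigma>"
  shows "u \<in> lattice_pts"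
proof -
  obtain B where "int_basis B" "insert u \<sigma> \<subseteq> B"
    using assms cone_extends_to_int_basis unfolding star_rays_def by blast
  then show ?thesis unfolding int_basis_def by auto
qed

text \<open>A piecewise linear function on the star of \<sigma> vanishes on \<sigma> and is linear on every
  cone \<rho> \<supseteq> \<sigma>, whose remaining generators are rays of the star fan.\<close>

lemma PL_eq_if_eq_on_star_rays:
  assumes "\<sigma> \<in> F" "g \<in> PL F \<sigma>" "h \<in> PL F \<sigma>" "\<forall>v\<in>star_rays F \<sigma>. g v = h v"
  shows "g = h"
proof
  fix x
  show "g x = h x"
  proof (cases "x \<in> star_supp F \<sigma>")
    case False
    then show ?thesis using assms(2,3) unfolding PL_def by auto
  next
    case True
    then obtain \<rho> where \<rho>: "\<rho> \<in> F" "\<sigma> \<subseteq> \<rho>" "x \<in> cone_of \<rho>"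
      unfolding star_supp_def by blast
    obtain m1 m2 where m1: "int_lin \<sigma> m1" "\<forall>x\<in>cone_of \<rho>. g x = m1 x"
      and m2: "int_lin \<sigma> m2" "\<forall>x\<in>cone_of \<rho>. h x = m2 x"
      using assms(2,3) \<rho>(1,2) unfolding PL_def by blast
    have "m1 s - m2 s = 0" if s: "s \<in> \<rho>" for s
    proof (cases "s \<in> \<sigma>")
      case True
      then show ?thesis using m1(1) m2(1) unfolding int_lin_def by auto
    next
      case False
      then have "s \<in> star_rays F \<sigma>"
        using face_closed[OF \<rho>(1)] \<rho>(2) s unfolding star_rays_def by auto
      moreover have "s \<in> cone_of \<rho>"
        using generator_in_cone_of finite_cone \<rho>(1) s by blast
      ultimately show ?thesis using assms(4) m1(2) m2(2) by auto
    qed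
    moreover have "linear (\<lambda>x. m1 x - m2 x)"
      using m1(1) m2(1) unfolding int_lin_def by (simp add: linear_compose_sub)
    ultimately have "m1 x - m2 x = 0"
      using linear_eq_0_on_cone_of \<rho>(3) by blast
    then show ?thesis using m1(2) m2(2) \<rho>(3) by auto
  qed
qed

end

subsection \<open>The star of a cone of codimension one\<close>

locale codim_one_cone = unimodular +
  fixes d :: nat and \<tau> :: "(real^'n) set"
  assumes fan_dim: "fan_dim F = d" and cone: "\<tau> \<in> F" and card_cone: "card \<tau> + 1 = d"
begin

lemma star_rayD:
  assumes "u \<in> star_rays F \<tau>"
  shows "u \<notin> \<tau>" "insert u \<tau> \<in> F"
  using assms unfolding star_rays_def by auto

lemma card_insert_star_ray: "u \<in> star_rays F \<tau> \<Longrightarrow> card (insert u \<tau>) = d"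
  using star_rayD finite_cone[OF cone] card_cone by simp

lemma maximal_insert_star_ray:
  assumes "u \<in> star_rays F \<tau>" "\<rho> \<in> F" "insert u \<tau> \<subseteq> \<rho>"
  shows "\<rho> = insert u \<tau>"
proof -
  have "card \<rho> \<le> fan_dim F"
    unfolding fan_dim_def using finite_fan assms(2) by simp
  then show ?thesis
    using card_seteq[OF finite_cone[OF assms(2)] assms(3)] card_insert_star_ray[OF assms(1)] fan_dim
    by simp
qed

lemma star_supp_insert_star_ray:
  assumes "u \<in> star_rays F \<tau>"
  shows "star_supp F (insert u \<tau>) = cone_of (insert u \<tau>)"
  using maximal_insert_star_ray[OF assms] star_rayD(2)[OF assms]
  unfolding star_supp_def by blast

lemma cone_of_insert_star_ray_subset:
  assumes "u \<in> star_rays F \<tau>"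
  shows "cone_of (insert u \<tau>) \<subseteq> star_supp F \<tau>"
  using star_rayD(2)[OF assms] unfolding star_supp_def by blast

lemma star_ray_in_cone_of:
  assumes "u \<in> star_rays F \<tau>"
  shows "u \<in> cone_of (insert u \<tau>)"
  using generator_in_cone_of finite_cone star_rayD(2)[OF assms] by blast

lemma cone_of_Int_insert_star_ray:
  assumes "u \<in> star_rays F \<tau>" "\<rho> \<in> F" "\<tau> \<subseteq> \<rho>" "u \<notin> \<rho>"
  shows "cone_of \<rho> \<inter> cone_of (insert u \<tau>) = cone_of \<tau>"
proof -
  have "\<rho> \<inter> insert u \<tau> = \<tau>" using assms(3,4) by auto
  then show ?thesis using cone_of_Int[OF assms(2) star_rayD(2)[OF assms(1)]] by simp
qed

lemma facets_containing_cone: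
  "{\<sigma>\<in>F. card \<sigma> = d \<and> \<tau> \<subseteq> \<sigma>} = (\<lambda>u. insert u \<tau>) ` star_rays F \<tau>"
proof
  show "{\<sigma>\<in>F. card \<sigma> = d \<and> \<tau> \<subseteq> \<sigma>} \<subseteq> (\<lambda>u. insert u \<tau>) ` star_rays F \<tau>"
  proof
    fix \<sigma> assume "\<sigma> \<in> {\<sigma>\<in>F. card \<sigma> = d \<and> \<tau> \<subseteq> \<sigma>}"
    then have \<sigma>: "\<sigma> \<in> F" "card \<sigma> = d" "\<tau> \<subseteq> \<sigma>" by auto
    have "card (\<sigma> - \<tau>) = 1"
      using \<sigma> card_cone finite_cone[OF cone] by (simp add: card_Diff_subset)
    then obtain u where "\<sigma> - \<tau> = {u}" by (rule card_1_singletonE)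
    then have "\<sigma> = insert u \<tau>" "u \<notin> \<tau>" using \<sigma>(3) by auto
    then show "\<sigma> \<in> (\<lambda>u. insert u \<tau>) ` star_rays F \<tau>"
      using \<sigma>(1) unfolding star_rays_def by auto
  qed
  show "(\<lambda>u. insert u \<tau>) ` star_rays F \<tau> \<subseteq> {\<sigma>\<in>F. card \<sigma> = d \<and> \<tau> \<subseteq> \<sigma>}"
    using star_rayD card_insert_star_ray by auto
qed

lemma sum_facets_eq_sum_star_rays:
  "(\<Sum>\<sigma>\<in>{\<sigma>\<in>F. card \<sigma> = d \<and> \<tau> \<subseteq> \<sigma>}. the_elem (\<sigma> - \<tau>)) = \<Sum>(star_rays F \<tau>)"
proof -
  have "inj_on (\<lambda>u. insert u \<tau>) (star_rays F \<tau>)"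
    by (rule inj_onI) (use star_rayD(1) in blast)
  moreover have "the_elem (insert u \<tau> - \<tau>) = u" if "u \<in> star_rays F \<tau>" for u
  proof -
    have "insert u \<tau> - \<tau> = {u}" using star_rayD(1)[OF that] by auto
    then show ?thesis by simp
  qed
  ultimately show ?thesis
    unfolding facets_containing_cone by (simp add: sum.reindex)
qed

text \<open>The witness is the coordinate functional of u in a Z-basis extending insert u \<tau>, cut off
  outside cone_of (insert u \<tau>). Every other cone of the star meets that cone only in
  cone_of \<tau>, where the functional vanishes.\<close>

lemma ex_PL_dual_to_star_ray:
  assumes u: "u \<in> star_rays F \<tau>"
  obtains \<delta> where "\<delta> \<in> PL F \<tau>" "\<delta> u = 1" "\<forall>v\<in>star_rays F \<tau> - {u}. \<delta> v = 0"
proof -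
  obtain B where B: "int_basis B" "insert u \<tau> \<subseteq> B"
    by (rule cone_extends_to_int_basis[OF star_rayD(2)[OF u]])
  obtain \<phi> :: "real^'n \<Rightarrow> real"
    where \<phi>: "linear \<phi>" "\<forall>x\<in>lattice_pts. \<phi> x \<in> \<int>" "\<phi> u = 1" "\<forall>b\<in>B - {u}. \<phi> b = 0"
    using B int_basis_coordinate[OF B(1), of u] by blast
  have "\<forall>s\<in>\<tau>. \<phi> s = 0" using \<phi>(4) B(2) star_rayD(1)[OF u] by auto
  then have \<phi>_int_lin: "int_lin \<tau> \<phi>" and \<phi>_cone: "\<forall>x\<in>cone_of \<tau>. \<phi> x = 0"
    using \<phi>(1,2) linear_eq_0_on_cone_of unfolding int_lin_def by blast+
  define \<delta> where "\<delta> x = (if x \<in> cone_of (insert u \<tau>) then \<phi> x else 0)" for x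
  have \<delta>_off: "\<forall>x\<in>cone_of \<rho>. \<delta> x = 0" if "\<rho> \<in> F" "\<tau> \<subseteq> \<rho>" "u \<notin> \<rho>" for \<rho>
    using cone_of_Int_insert_star_ray[OF u that] \<phi>_cone unfolding \<delta>_def by auto
  have "\<delta> \<in> PL F \<tau>"
    unfolding PL_def
  proof (intro CollectI conjI allI impI ballI)
    fix x assume "x \<notin> star_supp F \<tau>"
    then show "\<delta> x = 0" using cone_of_insert_star_ray_subset[OF u] unfolding \<delta>_def by auto
  next
    fix \<rho> assume \<rho>: "\<rho> \<in> F" "\<tau> \<subseteq> \<rho>"
    show "\<exists>m. int_lin \<tau> m \<and> (\<forall>x\<in>cone_of \<rho>. \<delta> x = m x)"
    proof (cases "u \<in> \<rho>")
      case True
      then have "\<rho> = insert u \<tau>" using maximal_insert_star_ray[OF u \<rho>(1)] \<rho>(2) by simp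
      then show ?thesis using \<phi>_int_lin unfolding \<delta>_def by auto
    next
      case False
      then show ?thesis using \<delta>_off[OF \<rho>] int_lin_zero by fastforce
    qed
  qed
  moreover have "\<delta> u = 1" using star_ray_in_cone_of[OF u] \<phi>(3) unfolding \<delta>_def by simp
  moreover have "\<delta> v = 0" if v: "v \<in> star_rays F \<tau> - {u}" for v
    using \<delta>_off[of "insert v \<tau>"] star_rayD[of v] star_rayD(1)[OF u] star_ray_in_cone_of[of v] v
    by auto
  ultimately show thesis using that by blast
qed

lemma courant_star_ray:
  assumes u: "u \<in> star_rays F \<tau>"
  shows "courant F \<tau> u \<in> PL F \<tau>" and "courant F \<tau> u u = 1"
    and "\<forall>v\<in>star_rays F \<tau> - {u}. courant F \<tau> u v = 0"
proof -
  let ?P = "\<lambda>f. f \<in> PL F \<tau> \<and> f u = 1 \<and> (\<forall>v\<in>star_rays F \<tau> - {u}. f v = 0)"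
  obtain \<delta> where \<delta>: "?P \<delta>" using ex_PL_dual_to_star_ray[OF u] by blast
  have uniq: "f = \<delta>" if "?P f" for f
  proof (rule PL_eq_if_eq_on_star_rays[OF cone])
    show "f \<in> PL F \<tau>" "\<delta> \<in> PL F \<tau>" using that \<delta> by auto
    show "\<forall>v\<in>star_rays F \<tau>. f v = \<delta> v"
    proof
      fix v assume "v \<in> star_rays F \<tau>"
      then show "f v = \<delta> v" using that \<delta> by (cases "v = u") auto
    qed
  qed
  have "?P (THE f. ?P f)" by (rule theI[of ?P, OF \<delta> uniq])
  then show "courant F \<tau> u \<in> PL F \<tau>" and "courant F \<tau> u u = 1"
    and "\<forall>v\<in>star_rays F \<tau> - {u}. courant F \<tau> u v = 0"
    unfolding courant_def by auto
qed

end

subsection \<open>The Euler characteristic on the star of a codimension-one cone\<close>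

locale ehrhart_codim_one_cone = codim_one_cone +
  fixes X :: "(real^'n) set \<Rightarrow> (real^'n \<Rightarrow> real) \<Rightarrow> int"
  assumes chi_ok: "\<sigma> \<in> F \<Longrightarrow> chi_ok F X \<sigma>"
begin

text \<open>The star fan of insert u \<tau> consists of the single cone insert u \<tau>, on which f agrees
  with an integral linear function, so the last term of the recursion for \<chi> is \<chi>(0) = 1.\<close>

lemma chi_eq_chi_diff_courant:
  assumes f: "f \<in> PL F \<tau>" and u: "u \<in> star_rays F \<tau>"
  shows "X \<tau> f = X \<tau> (\<lambda>x. f x - courant F \<tau> u x) + 1"
proof -
  have uF: "insert u \<tau> \<in> F" using star_rayD(2)[OF u] .
  obtain m where m: "int_lin \<tau> m" "\<forall>x\<in>cone_of (insert u \<tau>). f x = m x"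
    using f uF unfolding PL_def by blast
  have "m u = f u" using m(2) star_ray_in_cone_of[OF u] by simp
  then have "X \<tau> f = X \<tau> (\<lambda>x. f x - courant F \<tau> u x) + X (insert u \<tau>) (star_class F \<tau> u f m)"
    using chi_ok[OF cone] f u m(1) unfolding chi_ok_def by blast
  moreover have "star_class F \<tau> u f m = (\<lambda>x. 0)"
    using m(2) unfolding star_class_def star_supp_insert_star_ray[OF u] by auto
  moreover have "X (insert u \<tau>) (\<lambda>x. 0) = 1"
    using chi_ok[OF uF] unfolding chi_ok_def by blast
  ultimately show ?thesis by simp
qed

lemma chi_add_int_mult_courant:
  assumes g: "g \<in> PL F \<tau>" and u: "u \<in> star_rays F \<tau>"
  shows "X \<tau> (\<lambda>x. g x + of_int k * courant F \<tau> u x) = X \<tau> g + k"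
proof -
  have step: "X \<tau> (\<lambda>x. g x + of_int (i + 1) * courant F \<tau> u x)
      = X \<tau> (\<lambda>x. g x + of_int i * courant F \<tau> u x) + 1" for i
  proof -
    let ?f = "\<lambda>x. g x + of_int (i + 1) * courant F \<tau> u x"
    have "X \<tau> ?f = X \<tau> (\<lambda>x. ?f x - courant F \<tau> u x) + 1"
      using chi_eq_chi_diff_courant[OF PL_add_int_mult[OF g courant_star_ray(1)[OF u]] u] .
    also have "(\<lambda>x. ?f x - courant F \<tau> u x) = (\<lambda>x. g x + of_int i * courant F \<tau> u x)"
      by (simp add: algebra_simps)
    finally show ?thesis .
  qed
  show ?thesis
  proof (induction k rule: int_induct[of _ 0])
    case (step1 i)
    then show ?case using step[of i] by simp
  next
    case (step2 i)
    then show ?case using step[of "i - 1"] by simp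
  qed simp
qed

lemma chi_int_combination_courant:
  assumes "finite A" "A \<subseteq> star_rays F \<tau>"
  shows "X \<tau> (\<lambda>x. \<Sum>u\<in>A. of_int (k u) * courant F \<tau> u x) = 1 + sum k A"
  using assms
proof (induction A rule: finite_induct)
  case empty
  then show ?case using chi_ok[OF cone] unfolding chi_ok_def by simp
next
  case (insert v A)
  let ?G = "\<lambda>x. \<Sum>u\<in>A. of_int (k u) * courant F \<tau> u x"
  have v: "v \<in> star_rays F \<tau>" using insert.prems by simp
  have G: "?G \<in> PL F \<tau>"
    using insert.prems courant_star_ray(1) by (intro PL_sum_int_mult) auto
  have "(\<lambda>x. \<Sum>u\<in>insert v A. of_int (k u) * courant F \<tau> u x)
      = (\<lambda>x. ?G x + of_int (k v) * courant F \<tau> v x)"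
    using insert.hyps by (simp add: algebra_simps)
  then show ?case
    using chi_add_int_mult_courant[OF G v] insert by simp
qed

lemma int_lin_vanishes_on_sum_star_rays:
  assumes m: "int_lin \<tau> m"
  shows "m (\<Sum>(star_rays F \<tau>)) = 0"
proof -
  define k where "k u = \<lfloor>m u\<rfloor>" for u
  have m_int: "of_int (k u) = m u" if "u \<in> star_rays F \<tau>" for u
    using m star_ray_in_lattice_pts[OF that] unfolding int_lin_def k_def by auto
  let ?m = "\<lambda>x. if x \<in> star_supp F \<tau> then m x else 0"
  let ?G = "\<lambda>x. \<Sum>u\<in>star_rays F \<tau>. of_int (k u) * courant F \<tau> u x"
  have G: "?G \<in> PL F \<tau>"
    using courant_star_ray(1) by (intro PL_sum_int_mult)
  have "?m = ?G"
  proof (rule PL_eq_if_eq_on_star_rays[OF cone PL_restrict_int_lin[OF m] G], rule ballI)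
    fix v assume v: "v \<in> star_rays F \<tau>"
    have "?G v = (\<Sum>u\<in>star_rays F \<tau>. if u = v then of_int (k v) else 0)"
      using courant_star_ray(2,3) v by (intro sum.cong) auto
    also have "\<dots> = m v" using finite_star_rays v m_int by simp
    finally show "?m v = ?G v"
      using cone_of_insert_star_ray_subset[OF v] star_ray_in_cone_of[OF v] by auto
  qed
  then have "sum k (star_rays F \<tau>) = 0"
    using chi_restrict_int_lin[OF chi_ok[OF cone] m]
      chi_int_combination_courant[OF finite_star_rays order_refl] by simp
  moreover have "(\<Sum>u\<in>star_rays F \<tau>. m u) = of_int (sum k (star_rays F \<tau>))"
    using m_int by (simp add: of_int_sum)
  ultimately have "(\<Sum>u\<in>star_rays F \<tau>. m u) = 0" by simp
  then show ?thesis using m unfolding int_lin_def by (simp add: linear_sum)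
qed

end

theorem corollary3:
  fixes F :: "(real^'n) set set" and d :: nat and \<tau> :: "(real^'n) set"
  assumes "ehrhart_fan F" and "fan_dim F = d" and "\<tau> \<in> F" and "card \<tau> + 1 = d"
  shows "(\<Sum>\<sigma>\<in>{\<sigma>\<in>F. card \<sigma> = d \<and> \<tau> \<subseteq> \<sigma>}. the_elem (\<sigma> - \<tau>)) \<in> span \<tau>"
proof -
  obtain X where "unimodular_fan F" "\<forall>\<sigma>\<in>F. chi_ok F X \<sigma>"
    using assms(1) unfolding ehrhart_fan_def by blast
  then interpret ehrhart_codim_one_cone F d \<tau> X
    using assms by unfold_locales auto
  obtain B where "int_basis B" "\<tau> \<subseteq> B" by (rule cone_extends_to_int_basis[OF cone])
  then show ?thesis
    unfolding sum_facets_eq_sum_star_rays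
    using in_span_if_int_lin_vanish int_lin_vanishes_on_sum_star_rays by blast
qed

end
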